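(* Let $s\ge2$ be an even constant and $\epsilon$ a constant with $0<\epsilon<1/(2s-1)$. Let $I$ be an instance of the class $G^*_\epsilon$ with $n$ jobs, let $\mathcal{L}\subseteq\{0,1\}^n$ be the set of local optima of $I$, and for $x\in\{0,1\}^n$ let $h$ and $k$ be the numbers of large and small jobs, respectively, on the fuller machine of $x$. Then: (1) $|\{y\in\mathbb{R}:\exists x\in\{0,1\}^n \text{ with } f(x)=y\}|=O(n)$; (2) $|\{y\in\mathbb{R}:\exists x\in\mathcal{L} \text{ with } f(x)=y\}|=O(1)$; (3) for all $x\in\{0,1\}^n$ with $f(x)>1/2$, either $k=\Omega(n)$ and $x\notin\mathcal{L}$, or $\max(k,n-s-k)\ge\left(\frac12+a\right)(n-s)$ for some $a=\Omega(1)$.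
   Context: Partition problem: a solution $x\in\{0,1\}^n$ assigns job $i$ to machine $M_1$ if $x_i=0$ and to $M_2$ if $x_i=1$; the makespan $f(x)=\max\{\sum_i p_ix_i,\sum_i p_i(1-x_i)\}$ is minimised. The fuller machine is the machine whose load attains the makespan. A local optimum is a solution such that no solution at Hamming distance $1$ has strictly smaller makespan. The class $G^*_\epsilon$: instances with an even number $n$ of jobs, an even number $s=\Theta(1)$ of large jobs (jobs $1,\dots,s$), and processing times $p_i=\frac{1}{2s-1}-\frac{\epsilon}{2s}$ for $i\le s$ and $p_i=\frac{s-1}{n-s}\left(\frac{1}{2s-1}+\frac{\epsilon}{2(s-1)}\right)$ for $s<i\le n$ (the small jobs), where $0<\epsilon<1/(2s-1)$ is an arbitrarily small constant; note $\sum_i p_i=1$. Asymptotics are as $n\to\infty$. *)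

theory Defs
  imports Complex_Main "HOL-Library.FuncSet"
begin

text \<open>Processing times of the class G*_eps: jobs 1..s are large, s+1..n small.\<close>
definition ptime :: "nat \<Rightarrow> real \<Rightarrow> nat \<Rightarrow> nat \<Rightarrow> real" where
  "ptime s \<epsilon> n i =
     (if i \<le> s then 1 / (2 * real s - 1) - \<epsilon> / (2 * real s)
      else (real s - 1) / (real n - real s) *
           (1 / (2 * real s - 1) + \<epsilon> / (2 * (real s - 1))))"

definition sols :: "nat \<Rightarrow> (nat \<Rightarrow> nat) set" where
  "sols n = {1..n} \<rightarrow>\<^sub>E {0, 1}"

definition load1 :: "nat \<Rightarrow> real \<Rightarrow> nat \<Rightarrow> (nat \<Rightarrow> nat) \<Rightarrow> real" where
  "load1 s \<epsilon> n x = (\<Sum>i\<in>{1..n}. ptime s \<epsilon> n i * (1 - real (x i)))"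

definition load2 :: "nat \<Rightarrow> real \<Rightarrow> nat \<Rightarrow> (nat \<Rightarrow> nat) \<Rightarrow> real" where
  "load2 s \<epsilon> n x = (\<Sum>i\<in>{1..n}. ptime s \<epsilon> n i * real (x i))"

definition makespan :: "nat \<Rightarrow> real \<Rightarrow> nat \<Rightarrow> (nat \<Rightarrow> nat) \<Rightarrow> real" where
  "makespan s \<epsilon> n x = max (load2 s \<epsilon> n x) (load1 s \<epsilon> n x)"

definition hamming :: "nat \<Rightarrow> (nat \<Rightarrow> nat) \<Rightarrow> (nat \<Rightarrow> nat) \<Rightarrow> nat" where
  "hamming n x y = card {i\<in>{1..n}. x i \<noteq> y i}"

definition local_optima :: "nat \<Rightarrow> real \<Rightarrow> nat \<Rightarrow> (nat \<Rightarrow> nat) set" where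
  "local_optima s \<epsilon> n = {x \<in> sols n. \<forall>y\<in>sols n. hamming n x y = 1 \<longrightarrow>
        \<not> makespan s \<epsilon> n y < makespan s \<epsilon> n x}"

text \<open>The fuller machine, encoded by the value of x_i for the jobs on it
  (1 = M_2, 0 = M_1); ties broken towards M_1 (irrelevant when f(x) > 1/2).\<close>
definition fuller :: "nat \<Rightarrow> real \<Rightarrow> nat \<Rightarrow> (nat \<Rightarrow> nat) \<Rightarrow> nat" where
  "fuller s \<epsilon> n x = (if load2 s \<epsilon> n x > load1 s \<epsilon> n x then 1 else 0)"

definition hlarge :: "nat \<Rightarrow> real \<Rightarrow> nat \<Rightarrow> (nat \<Rightarrow> nat) \<Rightarrow> nat" where
  "hlarge s \<epsilon> n x = card {i\<in>{1..s}. x i = fuller s \<epsilon> n x}"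

definition ksmall :: "nat \<Rightarrow> real \<Rightarrow> nat \<Rightarrow> (nat \<Rightarrow> nat) \<Rightarrow> nat" where
  "ksmall s \<epsilon> n x = card {i\<in>{s+1..n}. x i = fuller s \<epsilon> n x}"

end

theory Submission
  imports Defs
begin

text \<open>With \<open>h\<close> large and \<open>k\<close> small jobs on the fuller machine the makespan is
  \<open>h L + k S\<close>, where the small time \<open>S\<close> is of order \<open>1/n\<close>; as \<open>h \<le> s\<close> this leaves
  only \<open>O(n)\<close> possible values. Moving a small job off the fuller machine improves the
  makespan as long as it exceeds \<open>(1 + S)/2\<close>, so in a local optimum with \<open>k > 0\<close> the
  value \<open>k\<close> is determined by \<open>h\<close>, and there are only \<open>O(1)\<close> values. Finally, if the
  small jobs are split almost evenly, \<open>|k - (n - s)/2| < a (n - s)\<close>, then a makespan above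
  \<open>1/2\<close> forces either an uneven split of the large jobs, costing at least \<open>L/2\<close>
  against \<open>a (n - s) S \<le> L/4\<close>, or, when \<open>h = s/2\<close>, at least one surplus small job
  (the parities of \<open>s\<close> and \<open>n\<close> match); either way the makespan exceeds \<open>(1 + S)/2\<close>.\<close>

lemma sols_values: "x \<in> sols n \<Longrightarrow> i \<in> {1..n} \<Longrightarrow> x i = 0 \<or> x i = 1"
  unfolding sols_def by auto

lemma flip_in_sols: "x \<in> sols n \<Longrightarrow> i \<in> {1..n} \<Longrightarrow> x(i := 1 - x i) \<in> sols n"
  unfolding sols_def by (auto simp: PiE_def Pi_def extensional_def)

lemma hamming_flip: "x \<in> sols n \<Longrightarrow> i \<in> {1..n} \<Longrightarrow> hamming n x (x(i := 1 - x i)) = 1"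
proof -
  assume "x \<in> sols n" "i \<in> {1..n}"
  then have "x i \<noteq> 1 - x i"
    using sols_values by fastforce
  then have "{j \<in> {1..n}. x j \<noteq> (x(i := 1 - x i)) j} = {i}"
    using \<open>i \<in> {1..n}\<close> by auto
  then show ?thesis
    unfolding hamming_def by simp
qed

lemma load1_add_load2: "load1 s \<epsilon> n x + load2 s \<epsilon> n x = (\<Sum>i\<in>{1..n}. ptime s \<epsilon> n i)"
  unfolding load1_def load2_def by (simp add: sum.distrib[symmetric] algebra_simps)

lemma makespan_ge_half_total: "(\<Sum>i\<in>{1..n}. ptime s \<epsilon> n i) \<le> 2 * makespan s \<epsilon> n x"
  using load1_add_load2[of s \<epsilon> n x] unfolding makespan_def by linarith

lemma load2_flip:
  assumes "x \<in> sols n" and i: "i \<in> {1..n}"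
  shows "load2 s \<epsilon> n (x(i := 1 - x i)) =
           load2 s \<epsilon> n x + (if x i = 0 then ptime s \<epsilon> n i else - ptime s \<epsilon> n i)"
proof -
  define rest where "rest = (\<Sum>j\<in>{1..n} - {i}. ptime s \<epsilon> n j * real (x j))"
  have "load2 s \<epsilon> n y = ptime s \<epsilon> n i * real (y i) + rest"
    if "\<forall>j\<in>{1..n} - {i}. y j = x j" for y
  proof -
    have "(\<Sum>j\<in>{1..n} - {i}. ptime s \<epsilon> n j * real (y j)) = rest"
      unfolding rest_def using that by (intro sum.cong) auto
    then show ?thesis
      unfolding load2_def sum.remove[OF finite_atLeastAtMost i] by simp
  qed
  then show ?thesis
    using sols_values[OF assms] by auto
qed

lemma makespan_flip_less:
  assumes x: "x \<in> sols n" and i: "i \<in> {1..n}" and fuller: "x i = fuller s \<epsilon> n x"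
    and pos: "0 < ptime s \<epsilon> n i"
    and large: "(\<Sum>j\<in>{1..n}. ptime s \<epsilon> n j) + ptime s \<epsilon> n i < 2 * makespan s \<epsilon> n x"
  shows "makespan s \<epsilon> n (x(i := 1 - x i)) < makespan s \<epsilon> n x"
proof -
  let ?y = "x(i := 1 - x i)"
  have sum_x: "load1 s \<epsilon> n x + load2 s \<epsilon> n x = (\<Sum>j\<in>{1..n}. ptime s \<epsilon> n j)"
    and sum_y: "load1 s \<epsilon> n ?y + load2 s \<epsilon> n ?y = (\<Sum>j\<in>{1..n}. ptime s \<epsilon> n j)"
    by (rule load1_add_load2)+
  show ?thesis
  proof (cases "load1 s \<epsilon> n x < load2 s \<epsilon> n x")
    case True
    then have "x i = 1"
      using fuller unfolding fuller_def by simp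
    moreover have "makespan s \<epsilon> n x = load2 s \<epsilon> n x"
      using True unfolding makespan_def by simp
    ultimately show ?thesis
      using load2_flip[OF x i] sum_x sum_y pos large
      unfolding makespan_def[of _ _ _ ?y] max_less_iff_conj by simp
  next
    case False
    then have "x i = 0"
      using fuller unfolding fuller_def by simp
    moreover have "makespan s \<epsilon> n x = load1 s \<epsilon> n x"
      using False unfolding makespan_def by simp
    ultimately show ?thesis
      using load2_flip[OF x i] sum_x sum_y pos large
      unfolding makespan_def[of _ _ _ ?y] max_less_iff_conj by simp
  qed
qed

lemma local_optima_sols: "x \<in> local_optima s \<epsilon> n \<Longrightarrow> x \<in> sols n"
  unfolding local_optima_def by simp

lemma flip_fuller_job_not_local_optimum:
  assumes "x \<in> sols n" and "i \<in> {1..n}" and "x i = fuller s \<epsilon> n x"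
    and "0 < ptime s \<epsilon> n i"
    and "(\<Sum>j\<in>{1..n}. ptime s \<epsilon> n j) + ptime s \<epsilon> n i < 2 * makespan s \<epsilon> n x"
  shows "x \<notin> local_optima s \<epsilon> n"
proof
  assume "x \<in> local_optima s \<epsilon> n"
  then have "\<not> makespan s \<epsilon> n (x(i := 1 - x i)) < makespan s \<epsilon> n x"
    using flip_in_sols[OF assms(1,2)] hamming_flip[OF assms(1,2)]
    unfolding local_optima_def by blast
  then show False
    using makespan_flip_less[OF assms] by simp
qed

lemma makespan_eq_sum_fuller:
  assumes x: "x \<in> sols n"
  shows "makespan s \<epsilon> n x = (\<Sum>i\<in>{i\<in>{1..n}. x i = fuller s \<epsilon> n x}. ptime s \<epsilon> n i)"
proof -
  have load_on: "(\<Sum>i\<in>{1..n}. ptime s \<epsilon> n i * (if v = 1 then real (x i) else 1 - real (x i)))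
      = (\<Sum>i\<in>{i\<in>{1..n}. x i = v}. ptime s \<epsilon> n i)" if "v = 0 \<or> v = 1" for v
    unfolding sum.inter_filter[OF finite_atLeastAtMost]
  proof (intro sum.cong refl)
    fix i assume "i \<in> {1..n}"
    then have "x i = 0 \<or> x i = 1"
      by (rule sols_values[OF x])
    then show "ptime s \<epsilon> n i * (if v = 1 then real (x i) else 1 - real (x i))
        = (if x i = v then ptime s \<epsilon> n i else 0)"
      using that by auto
  qed
  show ?thesis
  proof (cases "load1 s \<epsilon> n x < load2 s \<epsilon> n x")
    case True
    then show ?thesis
      using load_on[of 1] unfolding makespan_def fuller_def load2_def by simp
  next
    case False
    then show ?thesis
      using load_on[of 0] unfolding makespan_def fuller_def load1_def by simp
  qed
qed

lemma hlarge_le: "hlarge s \<epsilon> n x \<le> s"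
proof -
  have "hlarge s \<epsilon> n x \<le> card {1..s}"
    unfolding hlarge_def by (intro card_mono) auto
  then show ?thesis
    by simp
qed

lemma ksmall_le: "ksmall s \<epsilon> n x \<le> n - s"
proof -
  have "ksmall s \<epsilon> n x \<le> card {s+1..n}"
    unfolding ksmall_def by (intro card_mono) auto
  then show ?thesis
    by simp
qed

lemma ksmall_posE:
  assumes "0 < ksmall s \<epsilon> n x"
  obtains i where "i \<in> {s+1..n}" and "x i = fuller s \<epsilon> n x"
  using assms unfolding ksmall_def card_gt_0_iff by blast

locale gstar_params =
  fixes s :: nat and \<epsilon> :: real
  assumes two_le_s: "2 \<le> s" and eps_pos: "0 < \<epsilon>" and eps_less: "\<epsilon> < 1 / (2 * real s - 1)"
begin

definition large_time :: real where
  "large_time = 1 / (2 * real s - 1) - \<epsilon> / (2 * real s)"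

definition small_total :: real where
  "small_total = (real s - 1) / (2 * real s - 1) + \<epsilon> / 2"

definition small_time :: "nat \<Rightarrow> real" where
  "small_time n = small_total / (real n - real s)"

lemma large_time_pos: "0 < large_time"
proof -
  have "\<epsilon> / (2 * real s) < \<epsilon>"
    using eps_pos two_le_s by (simp add: divide_less_eq)
  then show ?thesis
    using eps_less unfolding large_time_def by simp
qed

lemma small_total_pos: "0 < small_total"
  using two_le_s eps_pos unfolding small_total_def by (simp add: add_pos_pos)

lemma small_time_pos: "s < n \<Longrightarrow> 0 < small_time n"
  using small_total_pos unfolding small_time_def by simp

lemma small_time_mult: "s < n \<Longrightarrow> (real n - real s) * small_time n = small_total"
  unfolding small_time_def by simp

lemma large_time_small_total: "real s * large_time + small_total = 1"
proof -
  have "2 * real s - 1 \<noteq> 0" "real s \<noteq> 0"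
    using two_le_s by auto
  then have "real s * large_time = real s / (2 * real s - 1) - \<epsilon> / 2"
    and "real s / (2 * real s - 1) + (real s - 1) / (2 * real s - 1) = 1"
    unfolding large_time_def by (simp_all add: right_diff_distrib add_divide_distrib[symmetric])
  then show ?thesis
    unfolding small_total_def by simp
qed

lemma ptime_large: "i \<le> s \<Longrightarrow> ptime s \<epsilon> n i = large_time"
  unfolding ptime_def large_time_def by simp

lemma ptime_small: "s < i \<Longrightarrow> ptime s \<epsilon> n i = small_time n"
proof -
  assume "s < i"
  have "2 * real s - 2 \<noteq> 0"
    using two_le_s by auto
  then have "(real s - 1) * (\<epsilon> / (2 * (real s - 1))) = \<epsilon> / 2"
    by (simp add: field_simps)
  then have "(real s - 1) * (1 / (2 * real s - 1) + \<epsilon> / (2 * (real s - 1))) = small_total"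
    unfolding small_total_def by (simp add: distrib_left)
  then show ?thesis
    using \<open>s < i\<close> unfolding ptime_def small_time_def by (simp add: times_divide_eq_left[symmetric])
qed

lemma ptime_pos: "s < n \<Longrightarrow> 0 < ptime s \<epsilon> n i"
  using large_time_pos small_time_pos ptime_large ptime_small by (cases "i \<le> s") auto

lemma sum_ptime: "s < n \<Longrightarrow> (\<Sum>i\<in>{1..n}. ptime s \<epsilon> n i) = 1"
proof -
  assume "s < n"
  then have split: "{1..n} = {1..s} \<union> {s+1..n}"
    by auto
  have "(\<Sum>i\<in>{1..n}. ptime s \<epsilon> n i) = real s * large_time + (real n - real s) * small_time n"
    unfolding split using \<open>s < n\<close>
    by (simp add: sum.union_disjoint ptime_large ptime_small of_nat_diff)
  then show ?thesis
    using small_time_mult[OF \<open>s < n\<close>] large_time_small_total by simp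
qed

lemma makespan_ge_half: "s < n \<Longrightarrow> 1/2 \<le> makespan s \<epsilon> n x"
  using makespan_ge_half_total[of s \<epsilon> n x] sum_ptime by simp

lemma makespan_eq_counts:
  assumes "x \<in> sols n" and "s < n"
  shows "makespan s \<epsilon> n x = real (hlarge s \<epsilon> n x) * large_time + real (ksmall s \<epsilon> n x) * small_time n"
proof -
  let ?on = "\<lambda>A. {i\<in>A. x i = fuller s \<epsilon> n x}"
  have split: "?on {1..n} = ?on {1..s} \<union> ?on {s+1..n}"
    using \<open>s < n\<close> by auto
  have "(\<Sum>i\<in>?on {1..n}. ptime s \<epsilon> n i)
      = (\<Sum>i\<in>?on {1..s}. ptime s \<epsilon> n i) + (\<Sum>i\<in>?on {s+1..n}. ptime s \<epsilon> n i)"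
    unfolding split by (rule sum.union_disjoint) auto
  also have "(\<Sum>i\<in>?on {1..s}. ptime s \<epsilon> n i) = real (hlarge s \<epsilon> n x) * large_time"
    unfolding hlarge_def by (simp add: ptime_large)
  also have "(\<Sum>i\<in>?on {s+1..n}. ptime s \<epsilon> n i) = real (ksmall s \<epsilon> n x) * small_time n"
    unfolding ksmall_def by (simp add: ptime_small)
  finally show ?thesis
    unfolding makespan_eq_sum_fuller[OF assms(1)] .
qed

lemma card_makespan_values_le:
  assumes "s < n"
  shows "card (makespan s \<epsilon> n ` sols n) \<le> (s + 1) * n"
proof -
  let ?value = "\<lambda>(h, k). real h * large_time + real k * small_time n"
  have "makespan s \<epsilon> n ` sols n \<subseteq> ?value ` ({0..s} \<times> {0..n - s})"
    using makespan_eq_counts[OF _ assms] hlarge_le ksmall_le by fastforce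
  then have "card (makespan s \<epsilon> n ` sols n) \<le> card ({0..s} \<times> {0..n - s})"
    by (meson card_image_le card_mono finite_SigmaI finite_atLeastAtMost finite_imageI le_trans)
  also have "\<dots> = (s + 1) * (n - s + 1)"
    by (simp add: card_cartesian_product)
  also have "\<dots> \<le> (s + 1) * n"
    using assms two_le_s by (intro mult_le_mono2) simp
  finally show ?thesis .
qed

lemma local_optimum_makespan_le:
  assumes "s < n" and opt: "x \<in> local_optima s \<epsilon> n" and "0 < ksmall s \<epsilon> n x"
  shows "2 * makespan s \<epsilon> n x \<le> 1 + small_time n"
proof (rule ccontr)
  assume gt: "\<not> ?thesis"
  obtain i where i: "i \<in> {s+1..n}" "x i = fuller s \<epsilon> n x"
    using ksmall_posE[OF \<open>0 < ksmall s \<epsilon> n x\<close>] .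
  have "x \<in> sols n"
    using opt by (rule local_optima_sols)
  moreover have "i \<in> {1..n}" and "ptime s \<epsilon> n i = small_time n"
    using i(1) ptime_small by auto
  ultimately have "x \<notin> local_optima s \<epsilon> n"
    using flip_fuller_job_not_local_optimum[OF _ _ i(2) ptime_pos[OF \<open>s < n\<close>]]
      gt sum_ptime[OF \<open>s < n\<close>] by simp
  then show False
    using opt by simp
qed

text \<open>The makespan of such a local optimum lies in \<open>[1/2, (1 + S)/2]\<close>, an interval of
  length \<open>S/2\<close>, which contains at most one value \<open>h L + k S\<close> for fixed \<open>h\<close>.\<close>
lemma local_optimum_ksmall_determined:
  assumes "s < n" and opt: "x \<in> local_optima s \<epsilon> n" and "0 < ksmall s \<epsilon> n x"
  shows "ksmall s \<epsilon> n x = nat \<lceil>(1/2 - real (hlarge s \<epsilon> n x) * large_time) / small_time n\<rceil>"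
proof -
  let ?t = "(1/2 - real (hlarge s \<epsilon> n x) * large_time) / small_time n"
  have "x \<in> sols n"
    using opt by (rule local_optima_sols)
  then have F: "makespan s \<epsilon> n x =
      real (hlarge s \<epsilon> n x) * large_time + real (ksmall s \<epsilon> n x) * small_time n"
    using \<open>s < n\<close> by (rule makespan_eq_counts)
  have S: "0 < small_time n"
    using small_time_pos[OF \<open>s < n\<close>] .
  have "?t \<le> real (ksmall s \<epsilon> n x)"
    using makespan_ge_half[OF \<open>s < n\<close>, of x] F S by (simp add: divide_le_eq)
  moreover have "real (ksmall s \<epsilon> n x) \<le> ?t + 1/2"
    using local_optimum_makespan_le[OF assms] F S by (simp add: field_simps)
  ultimately have "\<lceil>?t\<rceil> = int (ksmall s \<epsilon> n x)"
    by (intro ceiling_unique) auto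
  then show ?thesis
    by simp
qed

lemma card_local_optimum_values_le:
  assumes "s < n"
  shows "card (makespan s \<epsilon> n ` local_optima s \<epsilon> n) \<le> 2 * (s + 1)"
proof -
  let ?no_small = "(\<lambda>h. real h * large_time) ` {0..s}"
  let ?some_small = "(\<lambda>h. real h * large_time +
      real (nat \<lceil>(1/2 - real h * large_time) / small_time n\<rceil>) * small_time n) ` {0..s}"
  have "makespan s \<epsilon> n ` local_optima s \<epsilon> n \<subseteq> ?no_small \<union> ?some_small"
  proof
    fix v assume "v \<in> makespan s \<epsilon> n ` local_optima s \<epsilon> n"
    then obtain x where opt: "x \<in> local_optima s \<epsilon> n" and v: "v = makespan s \<epsilon> n x"
      by auto
    then have v_eq: "v = real (hlarge s \<epsilon> n x) * large_time + real (ksmall s \<epsilon> n x) * small_time n"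
      using makespan_eq_counts[OF local_optima_sols assms] by simp
    have h: "hlarge s \<epsilon> n x \<in> {0..s}"
      using hlarge_le by simp
    show "v \<in> ?no_small \<union> ?some_small"
    proof (cases "ksmall s \<epsilon> n x = 0")
      case True
      then show ?thesis
        using v_eq h by auto
    next
      case False
      then show ?thesis
        using v_eq h local_optimum_ksmall_determined[OF assms opt]
        by (intro UnI2 image_eqI[of _ _ "hlarge s \<epsilon> n x"]) auto
    qed
  qed
  then have "card (makespan s \<epsilon> n ` local_optima s \<epsilon> n) \<le> card ?no_small + card ?some_small"
    by (meson card_Un_le card_mono finite_UnI finite_atLeastAtMost finite_imageI le_trans)
  also have "\<dots> \<le> (s + 1) + (s + 1)"
    by (intro add_mono order_trans[OF card_image_le]) auto
  finally show ?thesis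
    by simp
qed

definition balance_margin :: real where
  "balance_margin = min (1/4) (large_time / (4 * small_total))"

lemma balance_margin_pos: "0 < balance_margin"
  using large_time_pos small_total_pos unfolding balance_margin_def by simp

lemma balance_margin_small_total: "balance_margin * small_total \<le> large_time / 4"
proof -
  have "balance_margin * small_total \<le> large_time / (4 * small_total) * small_total"
    using small_total_pos unfolding balance_margin_def by (intro mult_right_mono) auto
  then show ?thesis
    using small_total_pos by simp
qed

lemma near_balanced_makespan_gt:
  assumes x: "x \<in> sols n" and "s < n" and "even (n - s)"
    and short: "2 * small_time n < large_time" and above_half: "1/2 < makespan s \<epsilon> n x"
    and balanced: "\<bar>real (ksmall s \<epsilon> n x) - (real n - real s) / 2\<bar>
                      < balance_margin * (real n - real s)"
  shows "1 + small_time n < 2 * makespan s \<epsilon> n x"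
proof -
  define h k L S where "h = real (hlarge s \<epsilon> n x)" and "k = real (ksmall s \<epsilon> n x)"
    and "L = large_time" and "S = small_time n"
  define m where "m = real n - real s"
  have S: "0 < S"
    using small_time_pos[OF \<open>s < n\<close>] S_def by simp
  have excess: "makespan s \<epsilon> n x - 1/2 = (h - real s / 2) * L + (k - m / 2) * S"
    using makespan_eq_counts[OF x \<open>s < n\<close>] large_time_small_total small_time_mult[OF \<open>s < n\<close>]
    unfolding h_def k_def L_def S_def m_def by (simp add: algebra_simps)
  show ?thesis
  proof (cases "2 * hlarge s \<epsilon> n x = s")
    case True
    then have hs: "real s = 2 * h"
      unfolding h_def by (metis of_nat_mult of_nat_numeral)
    then have "0 < (k - m / 2) * S"
      using excess above_half by simp
    then have "m / 2 < k"
      using S by (simp add: zero_less_mult_iff)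
    then have "real (n - s) < real (2 * ksmall s \<epsilon> n x)"
      using \<open>s < n\<close> unfolding k_def m_def by (simp add: of_nat_diff)
    then have "n - s + 2 \<le> 2 * ksmall s \<epsilon> n x"
      using \<open>even (n - s)\<close> unfolding of_nat_less_iff by presburger
    then have "real n - real s + 2 \<le> 2 * k"
      using \<open>s < n\<close> unfolding k_def by (simp add: of_nat_diff less_imp_le)
    then have "m / 2 + 1 \<le> k"
      unfolding m_def by (simp add: field_simps)
    then have "S \<le> (k - m / 2) * S"
      using S by (simp add: mult_le_cancel_right1)
    then have "S \<le> makespan s \<epsilon> n x - 1/2"
      using hs excess by simp
    then show ?thesis
      using S unfolding S_def by linarith
  next
    case False
    then have "1/2 \<le> \<bar>h - real s / 2\<bar>"
      unfolding h_def by linarith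
    then have large_part: "L / 2 \<le> \<bar>(h - real s / 2) * L\<bar>"
      using large_time_pos unfolding L_def by (simp add: abs_mult mult_right_mono[of "1/2"])
    have "\<bar>(k - m / 2) * S\<bar> \<le> balance_margin * m * S"
      using balanced S unfolding k_def m_def by (simp add: abs_mult mult_right_mono)
    also have "\<dots> \<le> L / 4"
      using balance_margin_small_total small_time_mult[OF \<open>s < n\<close>]
      unfolding L_def S_def m_def by (simp add: mult.assoc)
    finally show ?thesis
      using excess large_part above_half short unfolding L_def S_def by linarith
  qed
qed

lemma unbalanced_or_not_local_optimum:
  assumes x: "x \<in> sols n" and "2 * s \<le> n" and "even (n - s)"
    and short: "2 * small_time n < large_time" and above_half: "1/2 < makespan s \<epsilon> n x"
  shows "(real n / 8 \<le> real (ksmall s \<epsilon> n x) \<and> x \<notin> local_optima s \<epsilon> n)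
       \<or> (1/2 + balance_margin) * (real n - real s)
           \<le> real (max (ksmall s \<epsilon> n x) (n - s - ksmall s \<epsilon> n x))"
proof (rule disjCI)
  let ?k = "ksmall s \<epsilon> n x"
  assume balanced: "\<not> (1/2 + balance_margin) * (real n - real s) \<le> real (max ?k (n - s - ?k))"
  have "s < n"
    using \<open>2 * s \<le> n\<close> two_le_s by simp
  have k_bounds: "real ?k < (1/2 + balance_margin) * (real n - real s)"
    "real (n - s - ?k) < (1/2 + balance_margin) * (real n - real s)"
    using balanced by (auto simp: max_def split: if_splits)
  have "real (n - s - ?k) = real n - real s - real ?k"
    using \<open>s < n\<close> ksmall_le[of s \<epsilon> n x] by (simp add: of_nat_diff)
  then have near: "\<bar>real ?k - (real n - real s) / 2\<bar> < balance_margin * (real n - real s)"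
    using k_bounds unfolding abs_less_iff by (simp add: field_simps)
  have "balance_margin * (real n - real s) \<le> 1/4 * (real n - real s)"
    using \<open>s < n\<close> unfolding balance_margin_def by (intro mult_right_mono) auto
  moreover have "2 * real s \<le> real n"
    using \<open>2 * s \<le> n\<close> by simp
  ultimately have k_large: "real n / 8 \<le> real ?k"
    using near unfolding abs_less_iff by (simp add: field_simps)
  have "0 < ?k"
    using k_large \<open>s < n\<close> by (simp add: field_simps)
  moreover have "1 + small_time n < 2 * makespan s \<epsilon> n x"
    using near_balanced_makespan_gt[OF x \<open>s < n\<close> \<open>even (n - s)\<close> short above_half near] .
  ultimately have "x \<notin> local_optima s \<epsilon> n"
    using local_optimum_makespan_le[OF \<open>s < n\<close>] by force
  then show "real n / 8 \<le> real ?k \<and> x \<notin> local_optima s \<epsilon> n"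
    using k_large by simp
qed

lemma eventually_small_time_short: "\<forall>\<^sub>F n in sequentially. 2 * small_time n < large_time"
proof -
  have "\<forall>\<^sub>F n in sequentially. real s + 2 * small_total / large_time < real n"
    using filterlim_real_sequentially filterlim_at_top_dense by blast
  then show ?thesis
  proof (rule eventually_mono)
    fix n assume bound: "real s + 2 * small_total / large_time < real n"
    moreover have "0 < 2 * small_total / large_time"
      using small_total_pos large_time_pos by simp
    ultimately have "0 < real n - real s"
      by linarith
    moreover have "2 * small_total < (real n - real s) * large_time"
      using bound large_time_pos by (simp add: field_simps)
    ultimately show "2 * small_time n < large_time"
      unfolding small_time_def by (simp add: pos_divide_less_eq mult.commute)
  qed
qed

end

theorem mainTheorem12:
  fixes s :: nat and \<epsilon> :: real
  assumes "even s" and "s \<ge> 2" and "0 < \<epsilon>" and "\<epsilon> < 1 / (2 * real s - 1)"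
  shows "(\<exists>C. \<forall>\<^sub>F n in sequentially. even n \<longrightarrow>
            real (card (makespan s \<epsilon> n ` sols n)) \<le> C * real n)
       \<and> (\<exists>C. \<forall>\<^sub>F n in sequentially. even n \<longrightarrow>
            real (card (makespan s \<epsilon> n ` local_optima s \<epsilon> n)) \<le> C)
       \<and> (\<exists>c>0. \<exists>a>0. \<forall>\<^sub>F n in sequentially. even n \<longrightarrow>
            (\<forall>x\<in>sols n. makespan s \<epsilon> n x > 1/2 \<longrightarrow>
               ((real (ksmall s \<epsilon> n x) \<ge> c * real n \<and> x \<notin> local_optima s \<epsilon> n)
                \<or> real (max (ksmall s \<epsilon> n x) (n - s - ksmall s \<epsilon> n x))
                    \<ge> (1/2 + a) * (real n - real s))))"
proof -
  interpret gstar_params s \<epsilon>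
    using assms(2-4) by unfold_locales
  have large_n: "\<forall>\<^sub>F n in sequentially. 2 * s \<le> n \<and> s < n"
    using eventually_ge_at_top[of "2 * s"] eventually_gt_at_top[of s] by eventually_elim simp
  have "\<forall>\<^sub>F n in sequentially. real (card (makespan s \<epsilon> n ` sols n)) \<le> real (s + 1) * real n"
    using large_n by eventually_elim (metis card_makespan_values_le of_nat_le_iff of_nat_mult)
  moreover have "\<forall>\<^sub>F n in sequentially.
      real (card (makespan s \<epsilon> n ` local_optima s \<epsilon> n)) \<le> real (2 * (s + 1))"
    using large_n by eventually_elim (metis card_local_optimum_values_le of_nat_le_iff)
  moreover have "\<forall>\<^sub>F n in sequentially. even n \<longrightarrow> (\<forall>x\<in>sols n. 1/2 < makespan s \<epsilon> n x \<longrightarrow>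
      (real n / 8 \<le> real (ksmall s \<epsilon> n x) \<and> x \<notin> local_optima s \<epsilon> n)
      \<or> (1/2 + balance_margin) * (real n - real s)
          \<le> real (max (ksmall s \<epsilon> n x) (n - s - ksmall s \<epsilon> n x)))"
    using large_n eventually_small_time_short
    by eventually_elim (use \<open>even s\<close> unbalanced_or_not_local_optimum in auto)
  ultimately show ?thesis
    using balance_margin_pos
    by (intro conjI exI[of _ "real (s + 1)"] exI[of _ "real (2 * (s + 1))"]
          exI[of _ "1/8"] exI[of _ balance_margin]) (auto elim: eventually_mono)
qed

end
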